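(* If $p>2$ is a prime, then $P(p,3)=\mathrm{lcm}(O(p),6)$.
   Context: $O(p)$ is the multiplicative order of $2$ modulo $p$. For positive integers $m,n$, let $\mathbf{Z}_m$ be the integers modulo $m$ and $T:\mathbf{Z}_m^n\to\mathbf{Z}_m^n$, $T(a_0,\dots,a_{n-1})=(a_0+a_1,a_1+a_2,\dots,a_{n-1}+a_0)$. For $\mathbf{a}\in\mathbf{Z}_m^n$ the cycle length of $(T^k\mathbf{a})_{k\ge0}$ is the smallest positive integer $P$ such that there is $N$ with $T^{k+P}\mathbf{a}=T^k\mathbf{a}$ for all $k\ge N$. $P(m,n)$ denotes the maximum of these cycle lengths over all $\mathbf{a}\in\mathbf{Z}_m^n$. *)

theory Defs
  imports "HOL-Number_Theory.Number_Theory"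
begin

definition zvecs :: "nat \<Rightarrow> nat \<Rightarrow> nat list set" where
  "zvecs m n = {a. length a = n \<and> (\<forall>x\<in>set a. x < m)}"

definition ducci :: "nat \<Rightarrow> nat list \<Rightarrow> nat list" where
  "ducci m a = map (\<lambda>i. (a ! i + a ! ((i + 1) mod length a)) mod m) [0..<length a]"

definition cycle_len :: "nat \<Rightarrow> nat list \<Rightarrow> nat" where
  "cycle_len m a = (LEAST P. 0 < P \<and>
     (\<exists>N. \<forall>k\<ge>N. (ducci m ^^ (k + P)) a = (ducci m ^^ k) a))"

definition ducci_P :: "nat \<Rightarrow> nat \<Rightarrow> nat" where
  "ducci_P m n = Max (cycle_len m ` zvecs m n)"

end

theory Submission
  imports Defs
begin

(* T acts on Z_p^3 as I + S, with S the cyclic shift, so T^k = c0(k) I + c1(k) S + c2(k) S^2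
   where c0 + c1 + c2 = 2^k, while the differences (c0 - c1, c1 - c2) evolve by
   (u, v) |-> (-v, u + v), a rotation of order 6 with values in {-1, 0, 1}. Hence, for p > 2,
   T^k fixes (1, 0, 0) modulo p iff 6 divides k and 2^k = 1 (mod p); for the converse one needs
   p to divide c1(k) = (2^k - 1)/3, which for p = 3 follows from 2^6 = 1 (mod 9). Once T^k fixes
   (1, 0, 0) it is the identity, so every orbit is purely periodic with period dividing
   lcm(ord_p 2, 6), and the orbit of (1, 0, 0) attains this period. *)

lemma finite_zvecs: "finite (zvecs m n)"
proof (rule finite_subset)
  show "zvecs m n \<subseteq> {xs. set xs \<subseteq> {0..<m} \<and> length xs = n}"
    by (auto simp: zvecs_def)
qed (rule finite_lists_length_eq, simp)

lemma zvecs_3E: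
  assumes "a \<in> zvecs m 3"
  obtains x y z where "a = [x, y, z]" and "x < m" and "y < m" and "z < m"
proof -
  obtain x y z where "a = [x, y, z]"
    using assms by (auto simp: zvecs_def numeral_3_eq_3 length_Suc_conv)
  with assms that show thesis by (auto simp: zvecs_def)
qed

lemma funpow_eq_self_if_eventually_periodic:
  fixes f :: "'a \<Rightarrow> 'a"
  assumes "0 < L" and "(f ^^ L) a = a" and "\<forall>k\<ge>N. (f ^^ (k + P)) a = (f ^^ k) a"
  shows "(f ^^ P) a = a"
proof -
  have "(f ^^ (N * L)) a = a"
    by (induction N) (simp_all add: funpow_add assms(2))
  moreover have "N \<le> N * L" using assms(1) by simp
  ultimately show ?thesis
    using assms(3) by (metis add.commute funpow_add comp_apply)
qed

lemma cycle_len_le: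
  assumes "0 < L" and "(ducci m ^^ L) a = a"
  shows "cycle_len m a \<le> L"
  unfolding cycle_len_def
  by (rule Least_le) (use assms in \<open>auto simp: funpow_add\<close>)

lemma cycle_len_pos_funpow_eq_self:
  assumes "0 < L" and "(ducci m ^^ L) a = a"
  shows "0 < cycle_len m a" and "(ducci m ^^ cycle_len m a) a = a"
proof -
  have "0 < L \<and> (\<exists>N. \<forall>k\<ge>N. (ducci m ^^ (k + L)) a = (ducci m ^^ k) a)"
    using assms by (auto simp: funpow_add)
  then have "0 < cycle_len m a \<and>
      (\<exists>N. \<forall>k\<ge>N. (ducci m ^^ (k + cycle_len m a)) a = (ducci m ^^ k) a)"
    unfolding cycle_len_def by (rule LeastI)
  then obtain N where "0 < cycle_len m a"
    and "\<forall>k\<ge>N. (ducci m ^^ (k + cycle_len m a)) a = (ducci m ^^ k) a"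
    by blast
  then show "0 < cycle_len m a" and "(ducci m ^^ cycle_len m a) a = a"
    using funpow_eq_self_if_eventually_periodic[OF assms] by blast+
qed

lemma ducci_P_eqI:
  assumes "0 < L" and fixes_L: "\<And>a. a \<in> zvecs m n \<Longrightarrow> (ducci m ^^ L) a = a"
    and "e \<in> zvecs m n" and periods_e: "\<And>k. (ducci m ^^ k) e = e \<Longrightarrow> L dvd k"
  shows "ducci_P m n = L"
  unfolding ducci_P_def
proof (rule Max_eqI)
  show "finite (cycle_len m ` zvecs m n)" by (simp add: finite_zvecs)
  show "c \<le> L" if "c \<in> cycle_len m ` zvecs m n" for c
    using that fixes_L cycle_len_le[OF \<open>0 < L\<close>] by blast
  have fixes_e: "(ducci m ^^ L) e = e" using fixes_L \<open>e \<in> zvecs m n\<close> .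
  then have "L dvd cycle_len m e" and "0 < cycle_len m e"
    using cycle_len_pos_funpow_eq_self[OF \<open>0 < L\<close>] periods_e by blast+
  with cycle_len_le[OF \<open>0 < L\<close> fixes_e] have "cycle_len m e = L"
    by (simp add: dvd_imp_le le_antisym)
  with \<open>e \<in> zvecs m n\<close> show "L \<in> cycle_len m ` zvecs m n" by force
qed

lemma cong_imp_eq_if_abs_diff_less:
  fixes u v m :: int
  assumes "\<bar>u - v\<bar> < m" and "[u = v] (mod m)"
  shows "u = v"
proof (rule ccontr)
  assume "u \<noteq> v"
  moreover have "m dvd u - v" using assms(2) by (simp add: cong_iff_dvd_diff)
  ultimately have "\<bar>m\<bar> \<le> \<bar>u - v\<bar>" by (simp add: dvd_imp_le_int)
  with assms(1) show False by simp
qed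

lemma prime_dvd_if_three_mul_add_one_eq_pow2:
  fixes p b n :: nat
  assumes "prime p" and "6 dvd n" and "[2 ^ n = 1] (mod p)" and "3 * b + 1 = 2 ^ n"
  shows "p dvd b"
proof -
  have "[3 * b + 1 = 0 + 1] (mod p)" using assms(3,4) by simp
  then have "p dvd 3 * b" by (simp only: cong_add_rcancel_nat cong_0_iff)
  show ?thesis
  proof (cases "p = 3")
    case True
    obtain q where "n = 6 * q" using assms(2) by blast
    then have "[2 ^ n = (64::nat) ^ q] (mod 9)" by (simp add: power_mult)
    also have "[(64::nat) ^ q = 1 ^ q] (mod 9)" by (rule cong_pow) (simp add: cong_def)
    finally have "[3 * b + 1 = 0 + 1] (mod 9)" using assms(4) by simp
    then have "9 dvd 3 * b" by (simp only: cong_add_rcancel_nat cong_0_iff)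
    with True show ?thesis by presburger
  next
    case False
    then have "\<not> p dvd 3"
      using assms(1) primes_dvd_imp_eq[of p 3] by auto
    with \<open>p dvd 3 * b\<close> assms(1) show ?thesis by (simp add: prime_dvd_mult_iff)
  qed
qed

fun ducci_coeff0 :: "nat \<Rightarrow> nat"
and ducci_coeff1 :: "nat \<Rightarrow> nat"
and ducci_coeff2 :: "nat \<Rightarrow> nat" where
  "ducci_coeff0 0 = 1"
| "ducci_coeff1 0 = 0"
| "ducci_coeff2 0 = 0"
| "ducci_coeff0 (Suc k) = ducci_coeff0 k + ducci_coeff2 k"
| "ducci_coeff1 (Suc k) = ducci_coeff1 k + ducci_coeff0 k"
| "ducci_coeff2 (Suc k) = ducci_coeff2 k + ducci_coeff1 k"

abbreviation ducci_diff01 :: "nat \<Rightarrow> int" where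
  "ducci_diff01 k \<equiv> int (ducci_coeff0 k) - int (ducci_coeff1 k)"

abbreviation ducci_diff12 :: "nat \<Rightarrow> int" where
  "ducci_diff12 k \<equiv> int (ducci_coeff1 k) - int (ducci_coeff2 k)"

lemma ducci_diffs_add_6:
  "ducci_diff01 (k + 6) = ducci_diff01 k" "ducci_diff12 (k + 6) = ducci_diff12 k"
  by (simp_all add: numeral_eq_Suc)

lemma ducci_diffs_mod_6:
  "ducci_diff01 k = ducci_diff01 (k mod 6) \<and> ducci_diff12 k = ducci_diff12 (k mod 6)"
proof (induction k rule: less_induct)
  case (less k)
  show ?case
  proof (cases "k < 6")
    case False
    then obtain j where "k = j + 6" by (metis add.commute le_Suc_ex not_less)
    then show ?thesis using less[of j] by (simp add: ducci_diffs_add_6)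
  qed simp
qed

lemma ducci_coeffs_1_to_5:
  "ducci_coeff0 1 = 1" "ducci_coeff1 1 = 1" "ducci_coeff2 1 = 0"
  "ducci_coeff0 2 = 1" "ducci_coeff1 2 = 2" "ducci_coeff2 2 = 1"
  "ducci_coeff0 3 = 2" "ducci_coeff1 3 = 3" "ducci_coeff2 3 = 3"
  "ducci_coeff0 4 = 5" "ducci_coeff1 4 = 5" "ducci_coeff2 4 = 6"
  "ducci_coeff0 5 = 11" "ducci_coeff1 5 = 10" "ducci_coeff2 5 = 11"
  by (simp_all add: numeral_eq_Suc)

lemma ducci_diffs_cases:
  obtains "k mod 6 = 0" "ducci_diff01 k = 1" "ducci_diff12 k = 0"
  | "k mod 6 = 1" "ducci_diff01 k = 0" "ducci_diff12 k = 1"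
  | "k mod 6 = 2" "ducci_diff01 k = -1" "ducci_diff12 k = 1"
  | "k mod 6 = 3" "ducci_diff01 k = -1" "ducci_diff12 k = 0"
  | "k mod 6 = 4" "ducci_diff01 k = 0" "ducci_diff12 k = -1"
  | "k mod 6 = 5" "ducci_diff01 k = 1" "ducci_diff12 k = -1"
proof -
  have "k mod 6 < 6" by simp
  then consider "k mod 6 = 0" | "k mod 6 = 1" | "k mod 6 = 2" | "k mod 6 = 3"
    | "k mod 6 = 4" | "k mod 6 = 5" by linarith
  then show thesis
    using that ducci_diffs_mod_6[of k] by cases (simp_all add: ducci_coeffs_1_to_5)
qed

lemma ducci_diffs_eq_iff: "ducci_diff01 k = 1 \<and> ducci_diff12 k = 0 \<longleftrightarrow> 6 dvd k"
  by (cases k rule: ducci_diffs_cases) auto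

lemma abs_ducci_diffs_le: "\<bar>ducci_diff01 k\<bar> \<le> 1" "\<bar>ducci_diff12 k\<bar> \<le> 1"
  by (cases k rule: ducci_diffs_cases; simp)+

lemma ducci_coeff_sum: "ducci_coeff0 k + ducci_coeff1 k + ducci_coeff2 k = 2 ^ k"
  by (induction k) simp_all

lemma ducci_3: "ducci m [x, y, z] = [(x + y) mod m, (y + z) mod m, (z + x) mod m]"
  by (simp add: ducci_def upt_rec)

lemma funpow_ducci_3:
  assumes "x < m" and "y < m" and "z < m"
  shows "(ducci m ^^ k) [x, y, z] =
    [(ducci_coeff0 k * x + ducci_coeff1 k * y + ducci_coeff2 k * z) mod m,
     (ducci_coeff2 k * x + ducci_coeff0 k * y + ducci_coeff1 k * z) mod m,
     (ducci_coeff1 k * x + ducci_coeff2 k * y + ducci_coeff0 k * z) mod m]"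
proof (induction k)
  case 0
  then show ?case using assms by simp
next
  case (Suc k)
  then show ?case by (simp add: ducci_3 mod_add_eq algebra_simps)
qed

lemma funpow_ducci_3_unit:
  assumes "1 < m"
  shows "(ducci m ^^ k) [1, 0, 0] =
    [ducci_coeff0 k mod m, ducci_coeff2 k mod m, ducci_coeff1 k mod m]"
  using funpow_ducci_3[of 1 m 0 0 k] assms by simp

lemma funpow_ducci_3_eq_self_if_unit:
  assumes "(ducci m ^^ k) [1, 0, 0] = [1, 0, 0]" and "1 < m"
    and "x < m" and "y < m" and "z < m"
  shows "(ducci m ^^ k) [x, y, z] = [x, y, z]"
proof -
  have coeffs: "ducci_coeff0 k mod m = 1" "ducci_coeff1 k mod m = 0" "ducci_coeff2 k mod m = 0"
    using assms(1) funpow_ducci_3_unit[OF assms(2)] by simp_all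
  have reduce:
      "(a * u + b * v + c * w) mod m = ((a mod m) * u + (b mod m) * v + (c mod m) * w) mod m"
    for a b c u v w :: nat
    by (intro mod_add_cong) (simp_all add: mod_mult_left_eq)
  show ?thesis
    using funpow_ducci_3[OF assms(3-5), of k] assms(3-5)
    by (simp add: reduce[of "ducci_coeff0 k"] reduce[of "ducci_coeff1 k"]
        reduce[of "ducci_coeff2 k"] coeffs)
qed

lemma lcm_ord_2_6_dvd_if_funpow_ducci_3_unit:
  fixes p :: nat
  assumes "2 < p" and "(ducci p ^^ k) [1, 0, 0] = [1, 0, 0]"
  shows "lcm (ord p 2) 6 dvd k"
proof -
  have cong: "[ducci_coeff0 k = 1] (mod p)" "[ducci_coeff1 k = 0] (mod p)"
    "[ducci_coeff2 k = 0] (mod p)"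
    using assms funpow_ducci_3_unit[of p k] by (simp_all add: cong_def)
  then have "[2 ^ k = 1 + 0 + 0] (mod p)"
    unfolding ducci_coeff_sum[symmetric] by (intro cong_add)
  then have "ord p 2 dvd k" by (simp add: ord_divides')
  have "[int (ducci_coeff0 k) = 1] (mod int p)" "[int (ducci_coeff1 k) = 0] (mod int p)"
    "[int (ducci_coeff2 k) = 0] (mod int p)"
    using cong by (simp_all flip: cong_int_iff)
  then have d01: "[ducci_diff01 k = 1 - 0] (mod int p)"
    and d12: "[ducci_diff12 k = 0 - 0] (mod int p)"
    by (blast intro: cong_diff)+
  have "ducci_diff01 k = 1 - 0"
    by (rule cong_imp_eq_if_abs_diff_less[OF _ d01])
      (use assms(1) abs_ducci_diffs_le(1)[of k] in linarith)
  moreover have "ducci_diff12 k = 0 - 0"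
    by (rule cong_imp_eq_if_abs_diff_less[OF _ d12])
      (use assms(1) abs_ducci_diffs_le(2)[of k] in linarith)
  ultimately have "6 dvd k"
    using ducci_diffs_eq_iff[of k] by simp
  with \<open>ord p 2 dvd k\<close> show ?thesis by (rule lcm_least)
qed

lemma funpow_ducci_3_unit_if_lcm_ord_2_6_dvd:
  fixes p :: nat
  assumes "prime p" and "lcm (ord p 2) 6 dvd k"
  shows "(ducci p ^^ k) [1, 0, 0] = [1, 0, 0]"
proof -
  have "6 dvd k" and "[2 ^ k = 1] (mod p)"
    using assms(2) by (simp_all add: ord_divides')
  then have coeff0: "ducci_coeff0 k = ducci_coeff1 k + 1"
    and "ducci_coeff1 k = ducci_coeff2 k"
    using ducci_diffs_eq_iff[of k] by linarith+
  then have "3 * ducci_coeff1 k + 1 = 2 ^ k"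
    using ducci_coeff_sum[of k] by simp
  then have "p dvd ducci_coeff1 k"
    using prime_dvd_if_three_mul_add_one_eq_pow2[OF assms(1) \<open>6 dvd k\<close> \<open>[2 ^ k = 1] (mod p)\<close>]
    by blast
  have "1 < p" using assms(1) by (rule prime_gt_1_nat)
  then have "(ducci p ^^ k) [1, 0, 0] =
      [ducci_coeff0 k mod p, ducci_coeff2 k mod p, ducci_coeff1 k mod p]"
    by (rule funpow_ducci_3_unit)
  also have "\<dots> = [1, 0, 0]"
    using \<open>p dvd ducci_coeff1 k\<close> \<open>ducci_coeff1 k = ducci_coeff2 k\<close> \<open>1 < p\<close>
    by (simp add: coeff0 mod_Suc dvd_eq_mod_eq_0)
  finally show ?thesis .
qed

theorem proposition7p3:
  fixes p :: nat
  assumes "prime p" and "p > 2"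
  shows "ducci_P p 3 = lcm (ord p 2) 6"
proof -
  define L where "L = lcm (ord p 2) 6"
  have "\<not> p dvd 2" using assms(2) by (auto dest: dvd_imp_le)
  then have "coprime p 2" by (rule prime_imp_coprime[OF assms(1)])
  then have "0 < L" by (simp add: L_def ord_eq_0 lcm_pos_nat)
  show ?thesis
    unfolding L_def[symmetric]
  proof (rule ducci_P_eqI[OF \<open>0 < L\<close>])
    show "(ducci p ^^ L) a = a" if "a \<in> zvecs p 3" for a
      using that funpow_ducci_3_unit_if_lcm_ord_2_6_dvd[OF assms(1), of L] assms(2)
      by (elim zvecs_3E) (auto simp: L_def intro: funpow_ducci_3_eq_self_if_unit)
    show "[1, 0, 0] \<in> zvecs p 3" using assms(2) by (simp add: zvecs_def)
    show "L dvd k" if "(ducci p ^^ k) [1, 0, 0] = [1, 0, 0]" for k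
      unfolding L_def using assms(2) that by (rule lcm_ord_2_6_dvd_if_funpow_ducci_3_unit)
  qed
qed

end
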